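(* Assume that $f$ satisfies the monotonicity condition $$(f(x,s_2,\xi_2)-f(x,s_1,\xi_1))(s_2-s_1)\le(\lambda_1-\varepsilon)(s_2-s_1)^2+L|\xi_2-\xi_1||s_2-s_1|$$ for all $x\in\Omega$, $s_1,s_2\in\mathbb R$ and $\xi_1,\xi_2\in\mathbb R^d$. Then the Dirichlet problem $-\Delta u=f(x,u,\nabla u)$ in $\Omega$, $u=0$ on $\partial\Omega$, has at most one weak solution.
   Context: Let $\Omega\subseteq\mathbb R^d$ be an arbitrary open set. $\lambda_1=\lambda_1(\Omega)\ge0$ denotes the largest real number such that $\lambda_1\|u\|^2_{L_2(\Omega)}\le\|\nabla u\|^2_{L_2(\Omega)}$ for all $u\in H^1_0(\Omega)$. $f:\Omega\times\mathbb R\times\mathbb R^d\to\mathbb R$ is a Carathéodory function: it is measurable in $x$ for fixed $(s,\xi)$, and continuous in $(s,\xi)$ for almost every $x$. Fix $\varepsilon>0$. Define $L_{\max}=\varepsilon/\sqrt{\lambda_1}$ if $\varepsilon\le2\lambda_1$ and $L_{\max}=2\sqrt{\varepsilon-\lambda_1}$ if $\varepsilon\ge2\lambda_1$. Let $0\le L<L_{\max}$. A weak solution of the Dirichlet problem is a function $u\in H^1_0(\Omega)$ with $f(\cdot,u,\nabla u)\in L_2(\Omega)$ and $\int_\Omega\nabla u\cdot\nabla\varphi\,dx=\int_\Omega f(x,u,\nabla u)\varphi\,dx$ for all $\varphi\in C_c^\infty(\Omega)$. *)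

theory Defs
  imports "HOL-Analysis.Analysis"
begin

text \<open>Functions on R^d are modelled as functions on an arbitrary euclidean space 'a
  (so d = DIM('a)); the Euclidean norm is the norm of 'a.\<close>

definition grad :: "('a::euclidean_space \<Rightarrow> real) \<Rightarrow> 'a \<Rightarrow> 'a" where
  "grad \<phi> x = (\<Sum>i\<in>Basis. frechet_derivative \<phi> (at x) i *\<^sub>R i)"

fun Ck :: "nat \<Rightarrow> ('a::euclidean_space \<Rightarrow> real) \<Rightarrow> bool" where
  "Ck 0 \<phi> = continuous_on UNIV \<phi>"
| "Ck (Suc k) \<phi> = (\<phi> differentiable_on UNIV \<and>
      (\<forall>v. Ck k (\<lambda>x. frechet_derivative \<phi> (at x) v)))"

definition smooth :: "('a::euclidean_space \<Rightarrow> real) \<Rightarrow> bool" where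
  "smooth \<phi> \<longleftrightarrow> (\<forall>k. Ck k \<phi>)"

text \<open>C_c^infinity(Omega), elements extended by zero outside Omega.\<close>
definition test_fun :: "'a::euclidean_space set \<Rightarrow> ('a \<Rightarrow> real) \<Rightarrow> bool" where
  "test_fun \<Omega> \<phi> \<longleftrightarrow> smooth \<phi> \<and> compact (closure {x. \<phi> x \<noteq> 0}) \<and>
      closure {x. \<phi> x \<noteq> 0} \<subseteq> \<Omega>"

definition L2 :: "'a::euclidean_space set \<Rightarrow> ('a \<Rightarrow> real) \<Rightarrow> bool" where
  "L2 \<Omega> u \<longleftrightarrow> u \<in> borel_measurable (lebesgue_on \<Omega>) \<and>
      integrable (lebesgue_on \<Omega>) (\<lambda>x. (u x)\<^sup>2)"

definition L2v :: "'a::euclidean_space set \<Rightarrow> ('a \<Rightarrow> 'a) \<Rightarrow> bool" where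
  "L2v \<Omega> g \<longleftrightarrow> g \<in> borel_measurable (lebesgue_on \<Omega>) \<and>
      integrable (lebesgue_on \<Omega>) (\<lambda>x. (norm (g x))\<^sup>2)"

definition weak_grad :: "'a::euclidean_space set \<Rightarrow> ('a \<Rightarrow> real) \<Rightarrow> ('a \<Rightarrow> 'a) \<Rightarrow> bool" where
  "weak_grad \<Omega> u g \<longleftrightarrow> (\<forall>\<phi>. test_fun \<Omega> \<phi> \<longrightarrow> (\<forall>i\<in>Basis.
      (\<integral>x. u x * (grad \<phi> x \<bullet> i) \<partial>lebesgue_on \<Omega>) =
      - (\<integral>x. (g x \<bullet> i) * \<phi> x \<partial>lebesgue_on \<Omega>)))"

definition H10 :: "'a::euclidean_space set \<Rightarrow> ('a \<Rightarrow> real) \<Rightarrow> ('a \<Rightarrow> 'a) \<Rightarrow> bool" where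
  "H10 \<Omega> u g \<longleftrightarrow> L2 \<Omega> u \<and> L2v \<Omega> g \<and> weak_grad \<Omega> u g \<and>
     (\<exists>\<phi>::nat \<Rightarrow> 'a \<Rightarrow> real. (\<forall>n. test_fun \<Omega> (\<phi> n)) \<and>
        (\<lambda>n. \<integral>x. (\<phi> n x - u x)\<^sup>2 \<partial>lebesgue_on \<Omega>) \<longlonglongrightarrow> 0 \<and>
        (\<lambda>n. \<integral>x. (norm (grad (\<phi> n) x - g x))\<^sup>2 \<partial>lebesgue_on \<Omega>) \<longlonglongrightarrow> 0)"

text \<open>lambda_1(Omega): the largest constant in the Poincare inequality on H^1_0(Omega).\<close>
definition lambda1 :: "'a::euclidean_space set \<Rightarrow> real" where
  "lambda1 \<Omega> = Sup {c. \<forall>u g. H10 \<Omega> u g \<longrightarrow>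
      c * (\<integral>x. (u x)\<^sup>2 \<partial>lebesgue_on \<Omega>) \<le> (\<integral>x. (norm (g x))\<^sup>2 \<partial>lebesgue_on \<Omega>)}"

definition caratheodory :: "'a::euclidean_space set \<Rightarrow> ('a \<Rightarrow> real \<Rightarrow> 'a \<Rightarrow> real) \<Rightarrow> bool" where
  "caratheodory \<Omega> f \<longleftrightarrow>
     (\<forall>s \<xi>. (\<lambda>x. f x s \<xi>) \<in> borel_measurable (lebesgue_on \<Omega>)) \<and>
     (AE x in lebesgue_on \<Omega>. continuous_on UNIV (\<lambda>(s, \<xi>). f x s \<xi>))"

definition weak_solution :: "'a::euclidean_space set \<Rightarrow> ('a \<Rightarrow> real \<Rightarrow> 'a \<Rightarrow> real) \<Rightarrow>
    ('a \<Rightarrow> real) \<Rightarrow> ('a \<Rightarrow> 'a) \<Rightarrow> bool" where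
  "weak_solution \<Omega> f u g \<longleftrightarrow> H10 \<Omega> u g \<and> L2 \<Omega> (\<lambda>x. f x (u x) (g x)) \<and>
     (\<forall>\<phi>. test_fun \<Omega> \<phi> \<longrightarrow>
        (\<integral>x. g x \<bullet> grad \<phi> x \<partial>lebesgue_on \<Omega>) = (\<integral>x. f x (u x) (g x) * \<phi> x \<partial>lebesgue_on \<Omega>))"

definition Lmax :: "real \<Rightarrow> real \<Rightarrow> real" where
  "Lmax l1 \<epsilon> = (if \<epsilon> \<le> 2 * l1 then \<epsilon> / sqrt l1 else 2 * sqrt (\<epsilon> - l1))"

end

theory Submission
  imports Defs
begin

text \<open>
  For weak solutions \<open>u\<^sub>1, u\<^sub>2\<close>, the difference \<open>w = u\<^sub>2 - u\<^sub>1\<close> lies in \<open>H\<^sup>1\<^sub>0(\<Omega>)\<close> with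
  weak gradient \<open>h = g\<^sub>2 - g\<^sub>1\<close>. Testing the difference of the two equations with \<open>w\<close>
  (legitimate by density of test functions) and using the monotonicity condition and
  Cauchy--Schwarz gives \<open>\<parallel>h\<parallel>\<^sup>2 \<le> (\<lambda>\<^sub>1 - \<epsilon>) \<parallel>w\<parallel>\<^sup>2 + L \<parallel>h\<parallel> \<parallel>w\<parallel>\<close> in \<open>L\<^sup>2\<close>.
  Combined with the Poincare inequality \<open>\<parallel>h\<parallel> \<ge> sqrt \<lambda>\<^sub>1 \<parallel>w\<parallel>\<close>, the bound \<open>L < L\<^sub>m\<^sub>a\<^sub>x\<close>
  leaves \<open>\<parallel>w\<parallel> = 0\<close> as the only possibility.
\<close>

section \<open>Test functions\<close>

lemma Ck_imp_continuous_on: "Ck k \<phi> \<Longrightarrow> continuous_on UNIV \<phi>"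
  by (cases k) (auto intro: differentiable_imp_continuous_on)

lemma frechet_derivative_diff:
  assumes "\<phi> differentiable (at x)" "\<psi> differentiable (at x)"
  shows "frechet_derivative (\<lambda>x. \<phi> x - \<psi> x) (at x) =
         (\<lambda>v. frechet_derivative \<phi> (at x) v - frechet_derivative \<psi> (at x) v)"
  using assms
  by (intro frechet_derivative_at[symmetric] has_derivative_diff)
     (auto simp: frechet_derivative_works)

lemma Ck_diff: "Ck k \<phi> \<Longrightarrow> Ck k \<psi> \<Longrightarrow> Ck k (\<lambda>x. \<phi> x - \<psi> x)"
proof (induction k arbitrary: \<phi> \<psi>)
  case 0
  then show ?case by (auto intro: continuous_intros)
next
  case (Suc k)
  then have "\<phi> differentiable (at x)" "\<psi> differentiable (at x)" for x
    by (auto simp: differentiable_on_def)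
  with Suc show ?case
    by (auto simp: frechet_derivative_diff intro: differentiable_on_diff)
qed

lemma smooth_diff: "smooth \<phi> \<Longrightarrow> smooth \<psi> \<Longrightarrow> smooth (\<lambda>x. \<phi> x - \<psi> x)"
  by (simp add: smooth_def Ck_diff)

lemma smooth_imp_differentiable: "smooth \<phi> \<Longrightarrow> \<phi> differentiable (at x)"
  using Ck.simps(2)[of 0 \<phi>] by (auto simp: smooth_def differentiable_on_def)

lemma grad_diff:
  "smooth \<phi> \<Longrightarrow> smooth \<psi> \<Longrightarrow> grad (\<lambda>x. \<phi> x - \<psi> x) x = grad \<phi> x - grad \<psi> x"
  by (simp add: grad_def frechet_derivative_diff smooth_imp_differentiable
      scaleR_diff_left sum_subtractf)

lemma continuous_on_grad: "smooth \<phi> \<Longrightarrow> continuous_on UNIV (grad \<phi>)"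
proof -
  assume "smooth \<phi>"
  then have "Ck (Suc 1) \<phi>" by (simp only: smooth_def)
  then have "continuous_on UNIV (\<lambda>x. frechet_derivative \<phi> (at x) v)" for v
    by (simp only: Ck.simps) (blast intro: Ck_imp_continuous_on)
  then show ?thesis
    unfolding grad_def by (intro continuous_intros) auto
qed

lemma grad_eq_0_outside_support:
  assumes "x \<notin> closure {x. \<phi> x \<noteq> 0}"
  shows "grad \<phi> x = 0"
proof -
  have "(\<phi> has_derivative (\<lambda>_. 0)) (at x)"
  proof (rule has_derivative_transform_within_open[OF has_derivative_const])
    show "open (- closure {x. \<phi> x \<noteq> 0})" and "x \<in> - closure {x. \<phi> x \<noteq> 0}"
      using assms by auto
    show "0 = \<phi> y" if "y \<in> - closure {x. \<phi> x \<noteq> 0}" for y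
      using that closure_subset[of "{x. \<phi> x \<noteq> 0}"] by force
  qed
  then show ?thesis
    by (simp add: grad_def frechet_derivative_at[symmetric])
qed

lemma test_fun_diff:
  assumes "test_fun \<Omega> \<phi>" "test_fun \<Omega> \<psi>"
  shows "test_fun \<Omega> (\<lambda>x. \<phi> x - \<psi> x)"
proof -
  let ?K = "closure {x. \<phi> x \<noteq> 0} \<union> closure {x. \<psi> x \<noteq> 0}"
  have "{x. \<phi> x - \<psi> x \<noteq> 0} \<subseteq> ?K"
    using closure_subset[of "{x. \<phi> x \<noteq> 0}"] closure_subset[of "{x. \<psi> x \<noteq> 0}"]
    by fastforce
  then have sub: "closure {x. \<phi> x - \<psi> x \<noteq> 0} \<subseteq> ?K"
    by (intro closure_minimal) auto
  have "compact ?K"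
    using assms by (auto simp: test_fun_def)
  then have "compact (?K \<inter> closure {x. \<phi> x - \<psi> x \<noteq> 0})"
    by (intro compact_Int_closed) auto
  with sub have "compact (closure {x. \<phi> x - \<psi> x \<noteq> 0})"
    by (simp add: Int_absorb1)
  with sub assms show ?thesis
    by (auto simp: test_fun_def smooth_diff)
qed

lemma integrable_lebesgue_on_if_compact_support:
  fixes \<psi> :: "'a::euclidean_space \<Rightarrow> real"
  assumes "continuous_on UNIV \<psi>" "compact K" "\<And>x. x \<notin> K \<Longrightarrow> \<psi> x = 0"
    and "S \<in> sets lebesgue"
  shows "integrable (lebesgue_on S) \<psi>"
proof -
  obtain a where "K \<subseteq> cbox (-a) a"
    using assms(2) compact_imp_bounded bounded_subset_cbox_symmetric by metis
  with assms(3) have \<psi>_eq: "\<psi> = (\<lambda>x. indicator (cbox (-a) a) x *\<^sub>R \<psi> x)"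
    by (auto simp: indicator_def fun_eq_iff)
  have "integrable (lebesgue_on (cbox (-a) a)) \<psi>"
    by (intro continuous_imp_integrable continuous_on_subset[OF assms(1)]) simp
  then have "integrable lebesgue \<psi>"
    by (subst \<psi>_eq) (simp add: integrable_restrict_space)
  then have "integrable lebesgue (\<lambda>x. indicator S x *\<^sub>R \<psi> x)"
    using assms(4) by (rule integrable_mult_indicator[rotated])
  then show ?thesis
    using assms(4) by (simp add: integrable_restrict_space)
qed

lemma
  assumes "test_fun \<Omega> \<phi>" "open \<Omega>"
  shows test_fun_L2: "L2 \<Omega> \<phi>" and test_fun_L2v: "L2v \<Omega> (grad \<phi>)"
proof -
  let ?K = "closure {x. \<phi> x \<noteq> 0}"
  have \<Omega>: "\<Omega> \<in> sets lebesgue"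
    using assms(2) by simp
  have K: "compact ?K" and s: "smooth \<phi>"
    using assms(1) by (auto simp: test_fun_def)
  have c: "continuous_on UNIV \<phi>"
    using s by (auto simp: smooth_def intro: Ck_imp_continuous_on)
  have "(\<phi> x)\<^sup>2 = 0" if "x \<notin> ?K" for x
    using that closure_subset[of "{x. \<phi> x \<noteq> 0}"] by force
  then have "integrable (lebesgue_on \<Omega>) (\<lambda>x. (\<phi> x)\<^sup>2)"
    using c K \<Omega> by (intro integrable_lebesgue_on_if_compact_support continuous_intros)
  moreover have "\<phi> \<in> borel_measurable (lebesgue_on \<Omega>)"
    using \<Omega> by (intro continuous_imp_measurable_on_sets_lebesgue continuous_on_subset[OF c]) auto
  ultimately show "L2 \<Omega> \<phi>"
    by (simp add: L2_def)
  have c': "continuous_on UNIV (grad \<phi>)"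
    using s by (rule continuous_on_grad)
  have "(norm (grad \<phi> x))\<^sup>2 = 0" if "x \<notin> ?K" for x
    using that by (simp add: grad_eq_0_outside_support)
  then have "integrable (lebesgue_on \<Omega>) (\<lambda>x. (norm (grad \<phi> x))\<^sup>2)"
    using c' K \<Omega> by (intro integrable_lebesgue_on_if_compact_support continuous_intros)
  moreover have "grad \<phi> \<in> borel_measurable (lebesgue_on \<Omega>)"
    using \<Omega> by (intro continuous_imp_measurable_on_sets_lebesgue continuous_on_subset[OF c']) auto
  ultimately show "L2v \<Omega> (grad \<phi>)"
    by (simp add: L2v_def)
qed

section \<open>Cauchy--Schwarz inequality for integrals\<close>

lemma le_sqrt_mult_if_weighted_bound:
  fixes A B C :: real
  assumes "0 \<le> A" "0 \<le> B" and bound: "\<And>t. t > 0 \<Longrightarrow> 2 * C \<le> t * A + B / t"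
  shows "C \<le> sqrt A * sqrt B"
proof (rule field_le_epsilon)
  fix e :: real assume "e > 0"
  define a b where "a = sqrt A" and "b = sqrt B"
  have ab: "0 \<le> a" "0 \<le> b" "A = a\<^sup>2" "B = b\<^sup>2"
    using assms(1,2) by (auto simp: a_def b_def)
  \<comment> \<open>The weight \<open>(b + d) / (a + d)\<close> approximates the optimal \<open>b / a\<close>, which fails for \<open>a = 0\<close>.\<close>
  define d where "d = e / (a + b + 1)"
  have d: "0 < d" "d * (a + b) \<le> e"
    using \<open>e > 0\<close> ab by (auto simp: d_def field_simps)
  have "2 * C \<le> (b + d) / (a + d) * A + B / ((b + d) / (a + d))"
    using bound[of "(b + d) / (a + d)"] ab d by simp
  also have "(b + d) / (a + d) * A \<le> (b + d) * a"
    using ab d by (simp add: field_simps power2_eq_square mult_left_mono)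
  also have "B / ((b + d) / (a + d)) \<le> b * (a + d)"
    using ab d by (simp add: field_simps power2_eq_square mult_left_mono)
  finally show "C \<le> a * b + e"
    using d \<open>e > 0\<close> by (simp add: algebra_simps)
qed

lemma
  fixes a b :: "'x \<Rightarrow> real"
  assumes "a \<in> borel_measurable M" "b \<in> borel_measurable M"
    and "integrable M (\<lambda>x. (a x)\<^sup>2)" "integrable M (\<lambda>x. (b x)\<^sup>2)"
  shows integrable_mult_if_square_integrable: "integrable M (\<lambda>x. a x * b x)"
    and Cauchy_Schwarz_integral:
      "(\<integral>x. \<bar>a x * b x\<bar> \<partial>M) \<le> sqrt (\<integral>x. (a x)\<^sup>2 \<partial>M) * sqrt (\<integral>x. (b x)\<^sup>2 \<partial>M)"
proof -
  have young: "2 * \<bar>a x * b x\<bar> \<le> t * (a x)\<^sup>2 + (b x)\<^sup>2 / t" if "t > 0" for t x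
  proof -
    have "0 \<le> (t * \<bar>a x\<bar> - \<bar>b x\<bar>)\<^sup>2 / t"
      using that by simp
    then show ?thesis
      using that by (simp add: power2_eq_square field_simps abs_mult)
  qed
  show int: "integrable M (\<lambda>x. a x * b x)"
  proof (rule Bochner_Integration.integrable_bound)
    show "integrable M (\<lambda>x. (a x)\<^sup>2 + (b x)\<^sup>2)"
      using assms(3,4) by simp
    have "\<bar>a x * b x\<bar> \<le> (a x)\<^sup>2 + (b x)\<^sup>2" for x
      using young[of 1 x] abs_ge_zero[of "a x * b x"] by simp
    then show "AE x in M. norm (a x * b x) \<le> norm ((a x)\<^sup>2 + (b x)\<^sup>2)"
      by (intro AE_I2) (simp add: abs_of_nonneg)
  qed (use assms(1,2) in simp)
  show "(\<integral>x. \<bar>a x * b x\<bar> \<partial>M) \<le> sqrt (\<integral>x. (a x)\<^sup>2 \<partial>M) * sqrt (\<integral>x. (b x)\<^sup>2 \<partial>M)"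
  proof (rule le_sqrt_mult_if_weighted_bound)
    fix t :: real assume "t > 0"
    have "2 * (\<integral>x. \<bar>a x * b x\<bar> \<partial>M) = (\<integral>x. 2 * \<bar>a x * b x\<bar> \<partial>M)"
      by simp
    also have "\<dots> \<le> (\<integral>x. t * (a x)\<^sup>2 + (b x)\<^sup>2 / t \<partial>M)"
      using int assms(3,4) young[OF \<open>t > 0\<close>] by (intro integral_mono) auto
    also have "\<dots> = t * (\<integral>x. (a x)\<^sup>2 \<partial>M) + (\<integral>x. (b x)\<^sup>2 \<partial>M) / t"
      using assms(3,4) by simp
    finally show "2 * (\<integral>x. \<bar>a x * b x\<bar> \<partial>M) \<le> \<dots>" .
  qed auto
qed

lemma
  fixes a b :: "'x \<Rightarrow> 'b::euclidean_space"
  assumes "a \<in> borel_measurable M" "b \<in> borel_measurable M"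
    and "integrable M (\<lambda>x. (norm (a x))\<^sup>2)" "integrable M (\<lambda>x. (norm (b x))\<^sup>2)"
  shows integrable_inner_if_square_integrable: "integrable M (\<lambda>x. a x \<bullet> b x)"
    and Cauchy_Schwarz_integral_inner: "\<bar>\<integral>x. a x \<bullet> b x \<partial>M\<bar>
      \<le> sqrt (\<integral>x. (norm (a x))\<^sup>2 \<partial>M) * sqrt (\<integral>x. (norm (b x))\<^sup>2 \<partial>M)"
proof -
  have norms: "(\<lambda>x. norm (a x)) \<in> borel_measurable M" "(\<lambda>x. norm (b x)) \<in> borel_measurable M"
    using assms(1,2) by auto
  note norm_int = integrable_mult_if_square_integrable[OF norms assms(3,4)]
  show int: "integrable M (\<lambda>x. a x \<bullet> b x)"
    using assms(1,2) norm_int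
    by (intro Bochner_Integration.integrable_bound[OF norm_int])
       (auto simp: Cauchy_Schwarz_ineq2)
  have "\<bar>\<integral>x. a x \<bullet> b x \<partial>M\<bar> \<le> (\<integral>x. \<bar>a x \<bullet> b x\<bar> \<partial>M)"
    by (rule integral_abs_bound)
  also have "\<dots> \<le> (\<integral>x. \<bar>norm (a x) * norm (b x)\<bar> \<partial>M)"
    using int norm_int by (intro integral_mono) (auto simp: Cauchy_Schwarz_ineq2)
  also have "\<dots> \<le> sqrt (\<integral>x. (norm (a x))\<^sup>2 \<partial>M) * sqrt (\<integral>x. (norm (b x))\<^sup>2 \<partial>M)"
    by (rule Cauchy_Schwarz_integral[OF norms assms(3,4)])
  finally show "\<bar>\<integral>x. a x \<bullet> b x \<partial>M\<bar> \<le> \<dots>" .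
qed

section \<open>Square-integrable functions\<close>

lemma L2_mult_integrable: "L2 \<Omega> a \<Longrightarrow> L2 \<Omega> b \<Longrightarrow> integrable (lebesgue_on \<Omega>) (\<lambda>x. a x * b x)"
  unfolding L2_def by (intro integrable_mult_if_square_integrable) auto

lemma L2v_inner_integrable:
  "L2v \<Omega> a \<Longrightarrow> L2v \<Omega> b \<Longrightarrow> integrable (lebesgue_on \<Omega>) (\<lambda>x. a x \<bullet> b x)"
  unfolding L2v_def by (intro integrable_inner_if_square_integrable) auto

lemma L2_norm: "L2v \<Omega> a \<Longrightarrow> L2 \<Omega> (\<lambda>x. norm (a x))"
  unfolding L2v_def L2_def by auto

lemma L2_inner_Basis:
  assumes "L2v \<Omega> g" "i \<in> Basis"
  shows "L2 \<Omega> (\<lambda>x. g x \<bullet> i)"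
proof -
  have "\<bar>g x \<bullet> i\<bar>\<^sup>2 \<le> (norm (g x))\<^sup>2" for x
    using Basis_le_norm[OF assms(2)] by (intro power_mono) auto
  then show ?thesis
    using assms(1) unfolding L2_def L2v_def
    by (auto intro: Bochner_Integration.integrable_bound)
qed

lemma
  assumes "L2 \<Omega> a" "L2 \<Omega> b"
  shows L2_diff: "L2 \<Omega> (\<lambda>x. a x - b x)"
    and L2_diff_le: "(\<integral>x. (a x - b x)\<^sup>2 \<partial>lebesgue_on \<Omega>)
      \<le> 2 * (\<integral>x. (a x)\<^sup>2 \<partial>lebesgue_on \<Omega>) + 2 * (\<integral>x. (b x)\<^sup>2 \<partial>lebesgue_on \<Omega>)"
proof -
  have meas: "a \<in> borel_measurable (lebesgue_on \<Omega>)" "b \<in> borel_measurable (lebesgue_on \<Omega>)"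
    using assms by (auto simp: L2_def)
  have le: "(a x - b x)\<^sup>2 \<le> 2 * (a x)\<^sup>2 + 2 * (b x)\<^sup>2" for x
    using zero_le_power2[of "a x + b x"] by (simp add: power2_eq_square algebra_simps)
  have int: "integrable (lebesgue_on \<Omega>) (\<lambda>x. (a x - b x)\<^sup>2)"
  proof (rule Bochner_Integration.integrable_bound)
    show "integrable (lebesgue_on \<Omega>) (\<lambda>x. 2 * (a x)\<^sup>2 + 2 * (b x)\<^sup>2)"
      using assms by (simp add: L2_def)
    show "AE x in lebesgue_on \<Omega>. norm ((a x - b x)\<^sup>2) \<le> norm (2 * (a x)\<^sup>2 + 2 * (b x)\<^sup>2)"
      using le by (intro AE_I2) simp
  qed (use meas in simp)
  then show "L2 \<Omega> (\<lambda>x. a x - b x)"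
    using meas by (simp add: L2_def)
  have "(\<integral>x. (a x - b x)\<^sup>2 \<partial>lebesgue_on \<Omega>)
      \<le> (\<integral>x. 2 * (a x)\<^sup>2 + 2 * (b x)\<^sup>2 \<partial>lebesgue_on \<Omega>)"
    using int assms le unfolding L2_def by (intro integral_mono) auto
  also have "\<dots> = 2 * (\<integral>x. (a x)\<^sup>2 \<partial>lebesgue_on \<Omega>) + 2 * (\<integral>x. (b x)\<^sup>2 \<partial>lebesgue_on \<Omega>)"
    using assms by (simp add: L2_def)
  finally show "(\<integral>x. (a x - b x)\<^sup>2 \<partial>lebesgue_on \<Omega>)
      \<le> 2 * (\<integral>x. (a x)\<^sup>2 \<partial>lebesgue_on \<Omega>) + 2 * (\<integral>x. (b x)\<^sup>2 \<partial>lebesgue_on \<Omega>)" .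
qed

lemma
  assumes "L2v \<Omega> a" "L2v \<Omega> b"
  shows L2v_diff: "L2v \<Omega> (\<lambda>x. a x - b x)"
    and L2v_diff_le: "(\<integral>x. (norm (a x - b x))\<^sup>2 \<partial>lebesgue_on \<Omega>)
      \<le> 2 * (\<integral>x. (norm (a x))\<^sup>2 \<partial>lebesgue_on \<Omega>) + 2 * (\<integral>x. (norm (b x))\<^sup>2 \<partial>lebesgue_on \<Omega>)"
proof -
  have meas: "a \<in> borel_measurable (lebesgue_on \<Omega>)" "b \<in> borel_measurable (lebesgue_on \<Omega>)"
    using assms by (auto simp: L2v_def)
  have le: "(norm (a x - b x))\<^sup>2 \<le> 2 * (norm (a x))\<^sup>2 + 2 * (norm (b x))\<^sup>2" for x
  proof -
    have "(norm (a x - b x))\<^sup>2 \<le> (norm (a x) + norm (b x))\<^sup>2"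
      by (intro power_mono norm_triangle_ineq4) auto
    then show ?thesis
      using zero_le_power2[of "norm (a x) - norm (b x)"] by (simp add: power2_eq_square algebra_simps)
  qed
  have int: "integrable (lebesgue_on \<Omega>) (\<lambda>x. (norm (a x - b x))\<^sup>2)"
  proof (rule Bochner_Integration.integrable_bound)
    show "integrable (lebesgue_on \<Omega>) (\<lambda>x. 2 * (norm (a x))\<^sup>2 + 2 * (norm (b x))\<^sup>2)"
      using assms by (simp add: L2v_def)
    show "AE x in lebesgue_on \<Omega>. norm ((norm (a x - b x))\<^sup>2)
        \<le> norm (2 * (norm (a x))\<^sup>2 + 2 * (norm (b x))\<^sup>2)"
      using le by (intro AE_I2) simp
  qed (use meas in simp)
  then show "L2v \<Omega> (\<lambda>x. a x - b x)"
    using meas by (simp add: L2v_def)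
  have "(\<integral>x. (norm (a x - b x))\<^sup>2 \<partial>lebesgue_on \<Omega>)
      \<le> (\<integral>x. 2 * (norm (a x))\<^sup>2 + 2 * (norm (b x))\<^sup>2 \<partial>lebesgue_on \<Omega>)"
    using int assms le unfolding L2v_def by (intro integral_mono) auto
  also have "\<dots> = 2 * (\<integral>x. (norm (a x))\<^sup>2 \<partial>lebesgue_on \<Omega>) + 2 * (\<integral>x. (norm (b x))\<^sup>2 \<partial>lebesgue_on \<Omega>)"
    using assms by (simp add: L2v_def)
  finally show "(\<integral>x. (norm (a x - b x))\<^sup>2 \<partial>lebesgue_on \<Omega>)
      \<le> 2 * (\<integral>x. (norm (a x))\<^sup>2 \<partial>lebesgue_on \<Omega>) + 2 * (\<integral>x. (norm (b x))\<^sup>2 \<partial>lebesgue_on \<Omega>)" .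
qed

lemma L2_pairing_tendsto:
  assumes "L2 \<Omega> c" "\<And>n. L2 \<Omega> (d n)" "L2 \<Omega> e"
    and "(\<lambda>n. \<integral>x. (d n x - e x)\<^sup>2 \<partial>lebesgue_on \<Omega>) \<longlonglongrightarrow> 0"
  shows "(\<lambda>n. \<integral>x. c x * d n x \<partial>lebesgue_on \<Omega>) \<longlonglongrightarrow> (\<integral>x. c x * e x \<partial>lebesgue_on \<Omega>)"
proof (rule LIM_zero_cancel)
  let ?M = "lebesgue_on \<Omega>"
  have bound: "norm ((\<integral>x. c x * d n x \<partial>?M) - (\<integral>x. c x * e x \<partial>?M))
      \<le> sqrt (\<integral>x. (c x)\<^sup>2 \<partial>?M) * sqrt (\<integral>x. (d n x - e x)\<^sup>2 \<partial>?M)" for n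
  proof -
    have "L2 \<Omega> (\<lambda>x. d n x - e x)"
      using assms by (intro L2_diff)
    then have "(\<integral>x. \<bar>c x * (d n x - e x)\<bar> \<partial>?M)
        \<le> sqrt (\<integral>x. (c x)\<^sup>2 \<partial>?M) * sqrt (\<integral>x. (d n x - e x)\<^sup>2 \<partial>?M)"
      using assms(1) unfolding L2_def by (intro Cauchy_Schwarz_integral) auto
    then have "\<bar>\<integral>x. c x * (d n x - e x) \<partial>?M\<bar> \<le> \<dots>"
      by (rule order_trans[OF integral_abs_bound])
    moreover have "(\<integral>x. c x * d n x \<partial>?M) - (\<integral>x. c x * e x \<partial>?M) = (\<integral>x. c x * (d n x - e x) \<partial>?M)"
      using assms by (simp add: L2_mult_integrable right_diff_distrib)
    ultimately show ?thesis
      by simp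
  qed
  have lim: "(\<lambda>n. sqrt (\<integral>x. (c x)\<^sup>2 \<partial>?M) * sqrt (\<integral>x. (d n x - e x)\<^sup>2 \<partial>?M)) \<longlonglongrightarrow> 0"
    using tendsto_mult_left[OF tendsto_real_sqrt[OF assms(4)]] by simp
  show "(\<lambda>n. (\<integral>x. c x * d n x \<partial>?M) - (\<integral>x. c x * e x \<partial>?M)) \<longlonglongrightarrow> 0"
    by (rule Lim_null_comparison[OF always_eventually[OF allI[OF bound]] lim])
qed

lemma L2v_pairing_tendsto:
  assumes "L2v \<Omega> c" "\<And>n. L2v \<Omega> (d n)" "L2v \<Omega> e"
    and "(\<lambda>n. \<integral>x. (norm (d n x - e x))\<^sup>2 \<partial>lebesgue_on \<Omega>) \<longlonglongrightarrow> 0"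
  shows "(\<lambda>n. \<integral>x. c x \<bullet> d n x \<partial>lebesgue_on \<Omega>) \<longlonglongrightarrow> (\<integral>x. c x \<bullet> e x \<partial>lebesgue_on \<Omega>)"
proof (rule LIM_zero_cancel)
  let ?M = "lebesgue_on \<Omega>"
  have bound: "norm ((\<integral>x. c x \<bullet> d n x \<partial>?M) - (\<integral>x. c x \<bullet> e x \<partial>?M))
      \<le> sqrt (\<integral>x. (norm (c x))\<^sup>2 \<partial>?M) * sqrt (\<integral>x. (norm (d n x - e x))\<^sup>2 \<partial>?M)" for n
  proof -
    have "L2v \<Omega> (\<lambda>x. d n x - e x)"
      using assms by (intro L2v_diff)
    then have "\<bar>\<integral>x. c x \<bullet> (d n x - e x) \<partial>?M\<bar>
        \<le> sqrt (\<integral>x. (norm (c x))\<^sup>2 \<partial>?M) * sqrt (\<integral>x. (norm (d n x - e x))\<^sup>2 \<partial>?M)"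
      using assms(1) unfolding L2v_def by (intro Cauchy_Schwarz_integral_inner) auto
    moreover have "(\<integral>x. c x \<bullet> d n x \<partial>?M) - (\<integral>x. c x \<bullet> e x \<partial>?M) = (\<integral>x. c x \<bullet> (d n x - e x) \<partial>?M)"
      using assms by (simp add: L2v_inner_integrable inner_diff_right)
    ultimately show ?thesis
      by simp
  qed
  have lim: "(\<lambda>n. sqrt (\<integral>x. (norm (c x))\<^sup>2 \<partial>?M) * sqrt (\<integral>x. (norm (d n x - e x))\<^sup>2 \<partial>?M)) \<longlonglongrightarrow> 0"
    using tendsto_mult_left[OF tendsto_real_sqrt[OF assms(4)]] by simp
  show "(\<lambda>n. (\<integral>x. c x \<bullet> d n x \<partial>?M) - (\<integral>x. c x \<bullet> e x \<partial>?M)) \<longlonglongrightarrow> 0"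
    by (rule Lim_null_comparison[OF always_eventually[OF allI[OF bound]] lim])
qed

section \<open>The space \<open>H\<^sup>1\<^sub>0\<close>\<close>

lemma weak_grad_diff:
  assumes "open \<Omega>" "H10 \<Omega> u1 g1" "H10 \<Omega> u2 g2"
  shows "weak_grad \<Omega> (\<lambda>x. u2 x - u1 x) (\<lambda>x. g2 x - g1 x)"
  unfolding weak_grad_def
proof (intro allI impI ballI)
  fix \<phi> and i :: 'a
  assume \<phi>: "test_fun \<Omega> \<phi>" and i: "i \<in> Basis"
  let ?M = "lebesgue_on \<Omega>"
  have L2: "L2 \<Omega> u1" "L2 \<Omega> u2" "L2 \<Omega> (\<lambda>x. g1 x \<bullet> i)" "L2 \<Omega> (\<lambda>x. g2 x \<bullet> i)"
    "L2 \<Omega> \<phi>" "L2 \<Omega> (\<lambda>x. grad \<phi> x \<bullet> i)"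
    using assms \<phi> i by (auto simp: H10_def intro: L2_inner_Basis test_fun_L2 test_fun_L2v)
  have "(\<integral>x. (u2 x - u1 x) * (grad \<phi> x \<bullet> i) \<partial>?M)
      = (\<integral>x. u2 x * (grad \<phi> x \<bullet> i) \<partial>?M) - (\<integral>x. u1 x * (grad \<phi> x \<bullet> i) \<partial>?M)"
    using L2 by (simp add: L2_mult_integrable left_diff_distrib)
  also have "\<dots> = (\<integral>x. (g1 x \<bullet> i) * \<phi> x \<partial>?M) - (\<integral>x. (g2 x \<bullet> i) * \<phi> x \<partial>?M)"
    using assms(2,3) \<phi> i by (simp add: H10_def weak_grad_def)
  also have "\<dots> = - (\<integral>x. ((g2 x - g1 x) \<bullet> i) * \<phi> x \<partial>?M)"
    using L2 by (simp add: L2_mult_integrable inner_diff_left left_diff_distrib)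
  finally show "(\<integral>x. (u2 x - u1 x) * (grad \<phi> x \<bullet> i) \<partial>?M)
      = - (\<integral>x. ((g2 x - g1 x) \<bullet> i) * \<phi> x \<partial>?M)" .
qed

lemma tendsto_0_if_le_sum:
  fixes X Y Z :: "nat \<Rightarrow> real"
  assumes "\<And>n. 0 \<le> X n" "\<And>n. X n \<le> 2 * Y n + 2 * Z n" "Y \<longlonglongrightarrow> 0" "Z \<longlonglongrightarrow> 0"
  shows "X \<longlonglongrightarrow> 0"
  using assms tendsto_add[OF tendsto_mult_left[OF assms(3)] tendsto_mult_left[OF assms(4)], of 2 2]
  by (intro tendsto_sandwich[of "\<lambda>_. 0" X sequentially "\<lambda>n. 2 * Y n + 2 * Z n"]) auto

lemma H10_diff:
  assumes "open \<Omega>" "H10 \<Omega> u1 g1" "H10 \<Omega> u2 g2"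
  shows "H10 \<Omega> (\<lambda>x. u2 x - u1 x) (\<lambda>x. g2 x - g1 x)"
proof -
  let ?M = "lebesgue_on \<Omega>"
  obtain p1 where p1: "\<And>n. test_fun \<Omega> (p1 n)"
    "(\<lambda>n. \<integral>x. (p1 n x - u1 x)\<^sup>2 \<partial>?M) \<longlonglongrightarrow> 0"
    "(\<lambda>n. \<integral>x. (norm (grad (p1 n) x - g1 x))\<^sup>2 \<partial>?M) \<longlonglongrightarrow> 0"
    using assms(2) by (auto simp: H10_def)
  obtain p2 where p2: "\<And>n. test_fun \<Omega> (p2 n)"
    "(\<lambda>n. \<integral>x. (p2 n x - u2 x)\<^sup>2 \<partial>?M) \<longlonglongrightarrow> 0"
    "(\<lambda>n. \<integral>x. (norm (grad (p2 n) x - g2 x))\<^sup>2 \<partial>?M) \<longlonglongrightarrow> 0"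
    using assms(3) by (auto simp: H10_def)
  have L2: "L2 \<Omega> u1" "L2 \<Omega> u2" "L2v \<Omega> g1" "L2v \<Omega> g2"
    using assms by (auto simp: H10_def)
  have smooth: "smooth (p1 n)" "smooth (p2 n)" for n
    using p1(1) p2(1) by (auto simp: test_fun_def)
  define \<psi> where "\<psi> n x = p2 n x - p1 n x" for n x
  have "test_fun \<Omega> (\<psi> n)" for n
    unfolding \<psi>_def by (rule test_fun_diff[OF p2(1) p1(1)])
  moreover have "(\<lambda>n. \<integral>x. (\<psi> n x - (u2 x - u1 x))\<^sup>2 \<partial>?M) \<longlonglongrightarrow> 0"
  proof (rule tendsto_0_if_le_sum[OF _ _ p2(2) p1(2)])
    fix n
    have "L2 \<Omega> (\<lambda>x. p2 n x - u2 x)" "L2 \<Omega> (\<lambda>x. p1 n x - u1 x)"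
      using assms(1) L2 p1(1) p2(1) by (auto intro: L2_diff test_fun_L2)
    from L2_diff_le[OF this] show "(\<integral>x. (\<psi> n x - (u2 x - u1 x))\<^sup>2 \<partial>?M)
        \<le> 2 * (\<integral>x. (p2 n x - u2 x)\<^sup>2 \<partial>?M) + 2 * (\<integral>x. (p1 n x - u1 x)\<^sup>2 \<partial>?M)"
      by (simp add: \<psi>_def algebra_simps)
  qed simp
  moreover have "(\<lambda>n. \<integral>x. (norm (grad (\<psi> n) x - (g2 x - g1 x)))\<^sup>2 \<partial>?M) \<longlonglongrightarrow> 0"
  proof (rule tendsto_0_if_le_sum[OF _ _ p2(3) p1(3)])
    fix n
    have "L2v \<Omega> (\<lambda>x. grad (p2 n) x - g2 x)" "L2v \<Omega> (\<lambda>x. grad (p1 n) x - g1 x)"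
      using assms(1) L2 p1(1) p2(1) by (auto intro: L2v_diff test_fun_L2v)
    moreover have "grad (\<psi> n) x - (g2 x - g1 x) = (grad (p2 n) x - g2 x) - (grad (p1 n) x - g1 x)" for x
      by (simp add: \<psi>_def[abs_def] grad_diff[OF smooth(2) smooth(1)] algebra_simps)
    ultimately show "(\<integral>x. (norm (grad (\<psi> n) x - (g2 x - g1 x)))\<^sup>2 \<partial>?M)
        \<le> 2 * (\<integral>x. (norm (grad (p2 n) x - g2 x))\<^sup>2 \<partial>?M)
          + 2 * (\<integral>x. (norm (grad (p1 n) x - g1 x))\<^sup>2 \<partial>?M)"
      by (simp only: L2v_diff_le)
  qed simp
  moreover have "L2 \<Omega> (\<lambda>x. u2 x - u1 x)" "L2v \<Omega> (\<lambda>x. g2 x - g1 x)"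
    using L2 by (simp_all add: L2_diff L2v_diff)
  ultimately show ?thesis
    using weak_grad_diff[OF assms] unfolding H10_def by blast
qed

lemma lambda1_Poincare:
  assumes "H10 \<Omega> u g" "(\<integral>x. (u x)\<^sup>2 \<partial>lebesgue_on \<Omega>) > 0"
  shows "0 \<le> lambda1 \<Omega>"
    and "lambda1 \<Omega> * (\<integral>x. (u x)\<^sup>2 \<partial>lebesgue_on \<Omega>) \<le> (\<integral>x. (norm (g x))\<^sup>2 \<partial>lebesgue_on \<Omega>)"
proof -
  let ?A = "\<integral>x. (u x)\<^sup>2 \<partial>lebesgue_on \<Omega>" and ?B = "\<integral>x. (norm (g x))\<^sup>2 \<partial>lebesgue_on \<Omega>"
  define S where "S = {c. \<forall>u g. H10 \<Omega> u g \<longrightarrow>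
      c * (\<integral>x. (u x)\<^sup>2 \<partial>lebesgue_on \<Omega>) \<le> (\<integral>x. (norm (g x))\<^sup>2 \<partial>lebesgue_on \<Omega>)}"
  have lambda1: "lambda1 \<Omega> = Sup S"
    by (simp add: lambda1_def S_def)
  have S0: "0 \<in> S"
    by (simp add: S_def)
  \<comment> \<open>A function with \<open>?A > 0\<close> is what makes \<open>S\<close> bounded above; otherwise \<open>Sup S\<close> is junk.\<close>
  have upper: "c \<le> ?B / ?A" if "c \<in> S" for c
    using that assms by (auto simp: S_def field_simps)
  then have "bdd_above S"
    by (auto simp: bdd_above_def)
  then show "0 \<le> lambda1 \<Omega>"
    using S0 lambda1 by (simp add: cSup_upper)
  have "lambda1 \<Omega> \<le> ?B / ?A"
    using S0 upper lambda1 by (auto intro: cSup_least)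
  then show "lambda1 \<Omega> * ?A \<le> ?B"
    using assms(2) by (simp add: field_simps)
qed

lemma weak_identity_extends_to_H10:
  assumes "open \<Omega>" "L2v \<Omega> h" "L2 \<Omega> F"
    and weak: "\<And>\<phi>. test_fun \<Omega> \<phi> \<Longrightarrow>
      (\<integral>x. h x \<bullet> grad \<phi> x \<partial>lebesgue_on \<Omega>) = (\<integral>x. F x * \<phi> x \<partial>lebesgue_on \<Omega>)"
    and "H10 \<Omega> u g"
  shows "(\<integral>x. h x \<bullet> g x \<partial>lebesgue_on \<Omega>) = (\<integral>x. F x * u x \<partial>lebesgue_on \<Omega>)"
proof -
  let ?M = "lebesgue_on \<Omega>"
  obtain p where p: "\<And>n. test_fun \<Omega> (p n)"
    "(\<lambda>n. \<integral>x. (p n x - u x)\<^sup>2 \<partial>?M) \<longlonglongrightarrow> 0"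
    "(\<lambda>n. \<integral>x. (norm (grad (p n) x - g x))\<^sup>2 \<partial>?M) \<longlonglongrightarrow> 0"
    using assms(5) by (auto simp: H10_def)
  have "L2 \<Omega> u" "L2v \<Omega> g"
    using assms(5) by (auto simp: H10_def)
  then have lim_h: "(\<lambda>n. \<integral>x. h x \<bullet> grad (p n) x \<partial>?M) \<longlonglongrightarrow> (\<integral>x. h x \<bullet> g x \<partial>?M)"
    and lim_F: "(\<lambda>n. \<integral>x. F x * p n x \<partial>?M) \<longlonglongrightarrow> (\<integral>x. F x * u x \<partial>?M)"
    using assms(1-3) p
    by (auto intro!: L2v_pairing_tendsto L2_pairing_tendsto test_fun_L2v test_fun_L2)
  have "(\<lambda>n. \<integral>x. h x \<bullet> grad (p n) x \<partial>?M) = (\<lambda>n. \<integral>x. F x * p n x \<partial>?M)"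
    using weak[OF p(1)] by simp
  with lim_h lim_F show ?thesis
    using LIMSEQ_unique by auto
qed

lemma weak_solution_diff:
  assumes "open \<Omega>" "weak_solution \<Omega> f u1 g1" "weak_solution \<Omega> f u2 g2" "test_fun \<Omega> \<phi>"
  shows "(\<integral>x. (g2 x - g1 x) \<bullet> grad \<phi> x \<partial>lebesgue_on \<Omega>)
    = (\<integral>x. (f x (u2 x) (g2 x) - f x (u1 x) (g1 x)) * \<phi> x \<partial>lebesgue_on \<Omega>)"
proof -
  have L2: "L2v \<Omega> g1" "L2v \<Omega> g2" "L2v \<Omega> (grad \<phi>)" "L2 \<Omega> \<phi>"
    "L2 \<Omega> (\<lambda>x. f x (u1 x) (g1 x))" "L2 \<Omega> (\<lambda>x. f x (u2 x) (g2 x))"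
    using assms by (auto simp: weak_solution_def H10_def intro: test_fun_L2 test_fun_L2v)
  then show ?thesis
    using assms(2-4)
    by (simp add: weak_solution_def inner_diff_left left_diff_distrib
        L2v_inner_integrable L2_mult_integrable)
qed

lemma weak_solution_diff_energy:
  assumes "open \<Omega>" "weak_solution \<Omega> f u1 g1" "weak_solution \<Omega> f u2 g2"
  shows "(\<integral>x. (norm (g2 x - g1 x))\<^sup>2 \<partial>lebesgue_on \<Omega>)
    = (\<integral>x. (f x (u2 x) (g2 x) - f x (u1 x) (g1 x)) * (u2 x - u1 x) \<partial>lebesgue_on \<Omega>)"
proof -
  have H10: "H10 \<Omega> u1 g1" "H10 \<Omega> u2 g2"
    and L2: "L2 \<Omega> (\<lambda>x. f x (u1 x) (g1 x))" "L2 \<Omega> (\<lambda>x. f x (u2 x) (g2 x))"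
    using assms(2,3) by (auto simp: weak_solution_def)
  have L2v: "L2v \<Omega> (\<lambda>x. g2 x - g1 x)"
    using H10 by (auto simp: H10_def intro: L2v_diff)
  have "(\<integral>x. (g2 x - g1 x) \<bullet> (g2 x - g1 x) \<partial>lebesgue_on \<Omega>)
    = (\<integral>x. (f x (u2 x) (g2 x) - f x (u1 x) (g1 x)) * (u2 x - u1 x) \<partial>lebesgue_on \<Omega>)"
    by (rule weak_identity_extends_to_H10[OF assms(1) L2v L2_diff[OF L2(2,1)]
          weak_solution_diff[OF assms] H10_diff[OF assms(1) H10]])
  then show ?thesis
    by (simp add: power2_norm_eq_inner)
qed

lemma weak_solution_diff_energy_le:
  fixes c L :: real
  assumes "open \<Omega>" "0 \<le> L"
    and mono: "\<And>x s1 s2 \<xi>1 \<xi>2. x \<in> \<Omega> \<Longrightarrow>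
        (f x s2 \<xi>2 - f x s1 \<xi>1) * (s2 - s1) \<le> c * (s2 - s1)\<^sup>2 + L * norm (\<xi>2 - \<xi>1) * \<bar>s2 - s1\<bar>"
    and "weak_solution \<Omega> f u1 g1" "weak_solution \<Omega> f u2 g2"
  defines "A \<equiv> \<integral>x. (u2 x - u1 x)\<^sup>2 \<partial>lebesgue_on \<Omega>"
    and "B \<equiv> \<integral>x. (norm (g2 x - g1 x))\<^sup>2 \<partial>lebesgue_on \<Omega>"
  shows "B \<le> c * A + L * sqrt B * sqrt A"
proof -
  let ?M = "lebesgue_on \<Omega>"
  have L2: "L2 \<Omega> (\<lambda>x. u2 x - u1 x)" "L2 \<Omega> (\<lambda>x. norm (g2 x - g1 x))"
    "L2 \<Omega> (\<lambda>x. f x (u2 x) (g2 x) - f x (u1 x) (g1 x))"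
    using assms(4,5) by (auto simp: weak_solution_def H10_def intro: L2_diff L2v_diff L2_norm)
  have int: "integrable ?M (\<lambda>x. (f x (u2 x) (g2 x) - f x (u1 x) (g1 x)) * (u2 x - u1 x))"
    "integrable ?M (\<lambda>x. norm (g2 x - g1 x) * (u2 x - u1 x))"
    using L2 by (simp_all add: L2_mult_integrable)
  have "B = (\<integral>x. (f x (u2 x) (g2 x) - f x (u1 x) (g1 x)) * (u2 x - u1 x) \<partial>?M)"
    unfolding B_def using assms(1,4,5) by (rule weak_solution_diff_energy)
  also have "\<dots> \<le> (\<integral>x. c * (u2 x - u1 x)\<^sup>2 + L * \<bar>norm (g2 x - g1 x) * (u2 x - u1 x)\<bar> \<partial>?M)"
  proof (rule integral_mono)
    show "(f x (u2 x) (g2 x) - f x (u1 x) (g1 x)) * (u2 x - u1 x)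
        \<le> c * (u2 x - u1 x)\<^sup>2 + L * \<bar>norm (g2 x - g1 x) * (u2 x - u1 x)\<bar>" if "x \<in> space ?M" for x
    proof -
      have "(f x (u2 x) (g2 x) - f x (u1 x) (g1 x)) * (u2 x - u1 x)
          \<le> c * (u2 x - u1 x)\<^sup>2 + L * norm (g2 x - g1 x) * \<bar>u2 x - u1 x\<bar>"
        using that by (intro mono) simp
      then show ?thesis
        by (simp add: abs_mult mult.assoc)
    qed
  qed (use int L2 in \<open>simp_all add: L2_def\<close>)
  also have "\<dots> = c * A + L * (\<integral>x. \<bar>norm (g2 x - g1 x) * (u2 x - u1 x)\<bar> \<partial>?M)"
    using int L2 by (simp add: A_def L2_def)
  also have "\<dots> \<le> c * A + L * (sqrt B * sqrt A)"
    using L2 assms(2) unfolding A_def B_def L2_def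
    by (intro add_left_mono mult_left_mono Cauchy_Schwarz_integral) (auto simp: abs_mult)
  finally show ?thesis
    by (simp add: mult.assoc)
qed

lemma Lmax_excludes_quadratic_bound:
  fixes a s l \<epsilon> L :: real
  assumes "0 < a" "0 \<le> l" "0 < \<epsilon>" "0 \<le> L" "L < Lmax l \<epsilon>"
    and "sqrt l * a \<le> s" "s\<^sup>2 \<le> (l - \<epsilon>) * a\<^sup>2 + L * s * a"
  shows False
  \<comment> \<open>The quadratic \<open>s\<^sup>2 - L a s - (l - \<epsilon>) a\<^sup>2\<close> is positive on \<open>s \<ge> sqrt l * a\<close>: for \<open>\<epsilon> \<le> 2 l\<close>
    its vertex lies left of \<open>sqrt l * a\<close>, where its value is \<open>a\<^sup>2 (\<epsilon> - L sqrt l) > 0\<close>;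
    otherwise its discriminant \<open>a\<^sup>2 (L\<^sup>2 - 4 (\<epsilon> - l))\<close> is negative.\<close>
proof (cases "\<epsilon> \<le> 2 * l")
  case True
  define r where "r = sqrt l"
  have "0 < r" "r * r = l"
    using True assms(2,3) by (auto simp: r_def)
  have "L < \<epsilon> / r"
    using assms(5) True by (simp add: Lmax_def r_def)
  then have "L * r < \<epsilon>"
    using \<open>0 < r\<close> by (simp add: field_simps)
  then have "L * r < (2 * r) * r"
    using True \<open>r * r = l\<close> by (simp add: algebra_simps)
  then have "L \<le> 2 * r"
    using \<open>0 < r\<close> by simp
  have "L * a \<le> 2 * (r * a)"
    using mult_right_mono[OF \<open>L \<le> 2 * r\<close> less_imp_le[OF assms(1)]] by (simp add: mult.assoc)
  then have "0 \<le> s - r * a" "0 \<le> s + r * a - L * a"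
    using assms(6) unfolding r_def by linarith+
  then have "0 \<le> (s - r * a) * (s + r * a - L * a)"
    by simp
  moreover have "0 < a\<^sup>2 * (\<epsilon> - L * r)"
    using assms(1) \<open>L * r < \<epsilon>\<close> by simp
  moreover have "s\<^sup>2 - L * s * a - (l - \<epsilon>) * a\<^sup>2 = (s - r * a) * (s + r * a - L * a) + a\<^sup>2 * (\<epsilon> - L * r)"
    using \<open>r * r = l\<close> by (simp add: power2_eq_square algebra_simps)
  ultimately show False
    using assms(7) by linarith
next
  case False
  have "L\<^sup>2 < (2 * sqrt (\<epsilon> - l))\<^sup>2"
    using assms(4,5) False by (intro power_strict_mono) (auto simp: Lmax_def)
  then have "L\<^sup>2 < 4 * (\<epsilon> - l)"
    using False assms(2) by (simp add: power_mult_distrib)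
  then have "0 < a\<^sup>2 * (\<epsilon> - l - L\<^sup>2 / 4)"
    using assms(1) by simp
  moreover have "s\<^sup>2 - L * s * a - (l - \<epsilon>) * a\<^sup>2 = (s - L * a / 2)\<^sup>2 + a\<^sup>2 * (\<epsilon> - l - L\<^sup>2 / 4)"
    by (simp add: power2_eq_square algebra_simps)
  ultimately show False
    using assms(7) zero_le_power2[of "s - L * a / 2"] by linarith
qed

theorem proposition4p1:
  fixes \<Omega> :: "'a::euclidean_space set"
    and f :: "'a \<Rightarrow> real \<Rightarrow> 'a \<Rightarrow> real"
    and \<epsilon> L :: real
    and u1 u2 :: "'a \<Rightarrow> real" and g1 g2 :: "'a \<Rightarrow> 'a"
  assumes "open \<Omega>"
    and "caratheodory \<Omega> f"
    and "\<epsilon> > 0"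
    and "0 \<le> L" and "L < Lmax (lambda1 \<Omega>) \<epsilon>"
    and mono: "\<And>x s1 s2 \<xi>1 \<xi>2. x \<in> \<Omega> \<Longrightarrow>
        (f x s2 \<xi>2 - f x s1 \<xi>1) * (s2 - s1)
          \<le> (lambda1 \<Omega> - \<epsilon>) * (s2 - s1)\<^sup>2 + L * norm (\<xi>2 - \<xi>1) * \<bar>s2 - s1\<bar>"
    and "weak_solution \<Omega> f u1 g1"
    and "weak_solution \<Omega> f u2 g2"
  shows "AE x in lebesgue_on \<Omega>. u1 x = u2 x"
proof -
  let ?A = "\<integral>x. (u2 x - u1 x)\<^sup>2 \<partial>lebesgue_on \<Omega>"
    and ?B = "\<integral>x. (norm (g2 x - g1 x))\<^sup>2 \<partial>lebesgue_on \<Omega>"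
  have H10: "H10 \<Omega> (\<lambda>x. u2 x - u1 x) (\<lambda>x. g2 x - g1 x)"
    using assms(1,7,8) by (auto simp: weak_solution_def intro: H10_diff)
  have energy: "?B \<le> (lambda1 \<Omega> - \<epsilon>) * ?A + L * sqrt ?B * sqrt ?A"
    using assms(1,4) mono assms(7,8) by (rule weak_solution_diff_energy_le)
  have "?A = 0"
  proof (rule ccontr)
    assume "?A \<noteq> 0"
    then have "?A > 0"
      by (simp add: order_less_le)
    with lambda1_Poincare[OF H10] have "0 \<le> lambda1 \<Omega>" "sqrt (lambda1 \<Omega>) * sqrt ?A \<le> sqrt ?B"
      by (auto simp flip: real_sqrt_mult)
    with energy \<open>?A > 0\<close> assms(3-5) show False
      by (intro Lmax_excludes_quadratic_bound[of "sqrt ?A" "lambda1 \<Omega>" \<epsilon> L "sqrt ?B"]) auto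
  qed
  moreover have "integrable (lebesgue_on \<Omega>) (\<lambda>x. (u2 x - u1 x)\<^sup>2)"
    using H10 by (simp add: H10_def L2_def)
  ultimately have "AE x in lebesgue_on \<Omega>. (u2 x - u1 x)\<^sup>2 = 0"
    by (simp add: integral_nonneg_eq_0_iff_AE)
  then show ?thesis
    by eventually_elim simp
qed

end
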